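(* Let $G$ be a group and $s,t\in G$, $s\ne t$, such that $\Gamma=\Phi(G,\{s,t\})$ is a simple graph. If $t$ has order $2$, then $\Gamma$ is an incidence graph, i.e. there is a multigraph $\Gamma'$ with $\Gamma\cong I\Gamma'$.
   Context: $\Phi(G,\{s,t\})$ is the multigraph with vertex set $V_s\cup V_t$, $V_s=\{\langle s\rangle x: x\in G\}$, $V_t=\{\langle t\rangle y : y\in G\}$ (right cosets), with one edge labeled $g$ between $\langle s\rangle x$ and $\langle t\rangle y$ for each $g\in\langle s\rangle x\cap\langle t\rangle y$, and no other edges. A simple graph has no loops and no parallel edges. For a multigraph $\Gamma'=(V',E',\psi')$ (loops and parallel edges allowed), the incidence graph $I\Gamma'$ is the simple graph with vertex set $V'\cup E'$ in which each $a\in E'$ is adjacent exactly to its end-points. *)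

theory Defs
  imports "HOL-Algebra.Algebra"
begin

text \<open>A multigraph (V, E, psi): loops and parallel edges allowed; psi e is the set of
  end-points of e (one vertex for a loop, two for a proper edge).\<close>
definition multigraph :: "'v set \<Rightarrow> 'e set \<Rightarrow> ('e \<Rightarrow> 'v set) \<Rightarrow> bool" where
  "multigraph V E psi \<longleftrightarrow> (\<forall>e\<in>E. psi e \<subseteq> V \<and> finite (psi e) \<and> 1 \<le> card (psi e) \<and> card (psi e) \<le> 2)"

definition simple_multigraph :: "'v set \<Rightarrow> 'e set \<Rightarrow> ('e \<Rightarrow> 'v set) \<Rightarrow> bool" where
  "simple_multigraph V E psi \<longleftrightarrow> multigraph V E psi \<and> (\<forall>e\<in>E. card (psi e) = 2) \<and> inj_on psi E"

definition adj_of :: "'e set \<Rightarrow> ('e \<Rightarrow> 'v set) \<Rightarrow> 'v \<Rightarrow> 'v \<Rightarrow> bool" where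
  "adj_of E psi u v \<longleftrightarrow> u \<noteq> v \<and> (\<exists>e\<in>E. psi e = {u, v})"

definition inc_vertices :: "'v set \<Rightarrow> 'e set \<Rightarrow> ('v + 'e) set" where
  "inc_vertices V E = V <+> E"

fun inc_adj :: "('e \<Rightarrow> 'v set) \<Rightarrow> ('v + 'e) \<Rightarrow> ('v + 'e) \<Rightarrow> bool" where
  "inc_adj psi (Inl v) (Inr e) \<longleftrightarrow> v \<in> psi e"
| "inc_adj psi (Inr e) (Inl v) \<longleftrightarrow> v \<in> psi e"
| "inc_adj psi _ _ \<longleftrightarrow> False"

definition graph_iso :: "'a set \<Rightarrow> ('a \<Rightarrow> 'a \<Rightarrow> bool) \<Rightarrow> 'b set \<Rightarrow> ('b \<Rightarrow> 'b \<Rightarrow> bool) \<Rightarrow> bool" where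
  "graph_iso V1 A1 V2 A2 \<longleftrightarrow> (\<exists>f. bij_betw f V1 V2 \<and> (\<forall>u\<in>V1. \<forall>v\<in>V1. A1 u v \<longleftrightarrow> A2 (f u) (f v)))"

text \<open>The coset graph Phi(G,{s,t}): vertices Inl (<s>x) and Inr (<t>y) (right cosets),
  and one edge (A, B, g) for each g in the intersection of A and B.\<close>
definition Phi_vertices :: "('a, 'b) monoid_scheme \<Rightarrow> 'a \<Rightarrow> 'a \<Rightarrow> ('a set + 'a set) set" where
  "Phi_vertices G s t =
     (\<lambda>x. generate G {s} #>\<^bsub>G\<^esub> x) ` carrier G <+> (\<lambda>y. generate G {t} #>\<^bsub>G\<^esub> y) ` carrier G"

definition Phi_edges :: "('a, 'b) monoid_scheme \<Rightarrow> 'a \<Rightarrow> 'a \<Rightarrow> ('a set \<times> 'a set \<times> 'a) set" where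
  "Phi_edges G s t = {(A, B, g). A \<in> (\<lambda>x. generate G {s} #>\<^bsub>G\<^esub> x) ` carrier G \<and>
                                 B \<in> (\<lambda>y. generate G {t} #>\<^bsub>G\<^esub> y) ` carrier G \<and> g \<in> A \<inter> B}"

definition Phi_ends :: "('a set \<times> 'a set \<times> 'a) \<Rightarrow> ('a set + 'a set) set" where
  "Phi_ends e = (case e of (A, B, g) \<Rightarrow> {Inl A, Inr B})"

end

theory Submission
  imports Defs
begin

text \<open>Since \<open>t\<close> is an involution, every right coset \<open>\<langle>t\<rangle>y = {y, ty}\<close> meets exactly one or two
  right cosets of \<open>\<langle>s\<rangle>\<close>. Hence \<open>\<Gamma>\<close> is bipartite with all \<open>\<langle>t\<rangle>\<close>-vertices of degree 1 or 2, and
  such a graph is the incidence graph of the multigraph whose vertices are the \<open>\<langle>s\<rangle>\<close>-cosets and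
  whose edges are the \<open>\<langle>t\<rangle>\<close>-cosets, each joined to its neighbours.\<close>

definition right_neighbours :: "('l + 'r \<Rightarrow> 'l + 'r \<Rightarrow> bool) \<Rightarrow> 'l set \<Rightarrow> 'r \<Rightarrow> 'l set" where
  "right_neighbours adj L b = {a \<in> L. adj (Inl a) (Inr b)}"

definition bipartite_ends :: "('l + 'r \<Rightarrow> 'l + 'r \<Rightarrow> bool) \<Rightarrow> 'l set \<Rightarrow> 'l + 'r \<Rightarrow> ('l + 'r) set" where
  "bipartite_ends adj L e = (case e of Inl _ \<Rightarrow> {} | Inr b \<Rightarrow> Inl ` right_neighbours adj L b)"

lemma multigraph_bipartite_ends:
  fixes adj :: "'l + 'r \<Rightarrow> 'l + 'r \<Rightarrow> bool" and R :: "'r set"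
  assumes "\<And>b. b \<in> R \<Longrightarrow> finite (right_neighbours adj L b)
                         \<and> 1 \<le> card (right_neighbours adj L b) \<and> card (right_neighbours adj L b) \<le> 2"
  shows "multigraph (Inl ` L) (Inr ` R :: ('l + 'r) set) (bipartite_ends adj L)"
  unfolding multigraph_def
proof
  fix e :: "'l + 'r" assume "e \<in> Inr ` R"
  then obtain b where "b \<in> R" "e = Inr b" by blast
  moreover have "right_neighbours adj L b \<subseteq> L"
    by (auto simp: right_neighbours_def)
  ultimately show "bipartite_ends adj L e \<subseteq> Inl ` L \<and> finite (bipartite_ends adj L e)
      \<and> 1 \<le> card (bipartite_ends adj L e) \<and> card (bipartite_ends adj L e) \<le> 2"
    using assms by (auto simp: bipartite_ends_def card_image)
qed

lemma inc_vertices_eq_image_map_sum: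
  "inc_vertices (Inl ` L) (Inr ` R) = map_sum Inl Inr ` (L <+> R)"
  by (force simp: inc_vertices_def)

lemma graph_iso_bipartite_incidence:
  assumes no_left_edges: "\<And>a a'. \<not> adj (Inl a) (Inl a')"
    and no_right_edges: "\<And>b b'. \<not> adj (Inr b) (Inr b')"
    and symmetric: "\<And>a b. adj (Inr b) (Inl a) \<longleftrightarrow> adj (Inl a) (Inr b)"
  shows "graph_iso (L <+> R) adj (inc_vertices (Inl ` L) (Inr ` R)) (inc_adj (bipartite_ends adj L))"
  unfolding graph_iso_def inc_vertices_eq_image_map_sum
proof (intro exI conjI ballI)
  show "bij_betw (map_sum Inl Inr) (L <+> R) (map_sum Inl Inr ` (L <+> R))"
    by (rule inj_on_imp_bij_betw) (auto simp: inj_on_def split: sum.splits)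
  fix u v assume "u \<in> L <+> R" "v \<in> L <+> R"
  then show "adj u v \<longleftrightarrow> inc_adj (bipartite_ends adj L) (map_sum Inl Inr u) (map_sum Inl Inr v)"
    using assms by (auto simp: bipartite_ends_def right_neighbours_def)
qed

lemma adj_of_sym: "adj_of E psi u v \<longleftrightarrow> adj_of E psi v u"
  unfolding adj_of_def by (auto simp: insert_commute)

lemma Phi_ends_not_Inl_Inl: "Phi_ends e \<noteq> {Inl A, Inl A'}"
  by (cases e) (auto simp: Phi_ends_def doubleton_eq_iff)

lemma Phi_ends_not_Inr_Inr: "Phi_ends e \<noteq> {Inr B, Inr B'}"
  by (cases e) (auto simp: Phi_ends_def doubleton_eq_iff)

lemma adj_of_Phi_Inl_Inl: "\<not> adj_of E Phi_ends (Inl A) (Inl A')"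
  by (metis adj_of_def Phi_ends_not_Inl_Inl)

lemma adj_of_Phi_Inr_Inr: "\<not> adj_of E Phi_ends (Inr B) (Inr B')"
  by (metis adj_of_def Phi_ends_not_Inr_Inr)

lemma adj_of_Phi_Inl_Inr:
  "adj_of (Phi_edges G s t) Phi_ends (Inl A) (Inr B) \<longleftrightarrow>
     A \<in> (\<lambda>x. generate G {s} #>\<^bsub>G\<^esub> x) ` carrier G \<and>
     B \<in> (\<lambda>y. generate G {t} #>\<^bsub>G\<^esub> y) ` carrier G \<and> A \<inter> B \<noteq> {}"
  by (auto simp: adj_of_def Phi_edges_def Phi_ends_def doubleton_eq_iff)

lemma (in group) rcosets_meeting_eq:
  assumes "subgroup H G" "B \<subseteq> carrier G"
  shows "{A \<in> (\<lambda>x. H #> x) ` carrier G. A \<inter> B \<noteq> {}} = (\<lambda>g. H #> g) ` B"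
proof (intro equalityI subsetI)
  fix A assume "A \<in> {A \<in> (\<lambda>x. H #> x) ` carrier G. A \<inter> B \<noteq> {}}"
  then obtain x g where "x \<in> carrier G" "A = H #> x" "g \<in> A" "g \<in> B" by blast
  then show "A \<in> (\<lambda>g. H #> g) ` B"
    using repr_independence assms(1) by blast
next
  fix A assume "A \<in> (\<lambda>g. H #> g) ` B"
  then obtain g where "g \<in> B" "A = H #> g" by blast
  then show "A \<in> {A \<in> (\<lambda>x. H #> x) ` carrier G. A \<inter> B \<noteq> {}}"
    using assms rcos_self by blast
qed

lemma (in group) card_rcos_generate:
  assumes "t \<in> carrier G" "y \<in> carrier G"
  shows "card (generate G {t} #> y) = ord t"
  using generate_pow_card card_rcosets_equal rcosetsI generate_incl assms
  by (metis empty_subsetI insert_subset)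

lemma (in group) card_rcosets_meeting_involution_coset:
  assumes "subgroup H G" "t \<in> carrier G" "ord t = 2" "y \<in> carrier G"
  defines "N \<equiv> (\<lambda>g. H #> g) ` (generate G {t} #> y)"
  shows "finite N \<and> 1 \<le> card N \<and> card N \<le> 2"
proof -
  have card_coset: "card (generate G {t} #> y) = 2"
    using card_rcos_generate assms by simp
  then have "finite (generate G {t} #> y)" by (intro card_ge_0_finite) simp
  moreover have "y \<in> generate G {t} #> y"
    using rcos_self generate_is_subgroup assms by blast
  ultimately show ?thesis
    unfolding N_def using card_image_le card_coset
    by (metis One_nat_def Suc_leI card_gt_0_iff empty_iff finite_imageI image_is_empty)
qed

theorem proposition8:
  fixes G (structure) and s t :: 'a
  assumes "group G"
    and "s \<in> carrier G" and "t \<in> carrier G" and "s \<noteq> t"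
    and "simple_multigraph (Phi_vertices G s t) (Phi_edges G s t) Phi_ends"
    and "group.ord G t = 2"
  shows "\<exists>(V' :: ('a set + 'a set) set) (E' :: ('a set + 'a set) set) psi'.
           multigraph V' E' psi' \<and>
           graph_iso (Phi_vertices G s t) (adj_of (Phi_edges G s t) Phi_ends)
                     (inc_vertices V' E') (inc_adj psi')"
proof -
  interpret group G by fact
  define L where "L = (\<lambda>x. generate G {s} #> x) ` carrier G"
  define R where "R = (\<lambda>y. generate G {t} #> y) ` carrier G"
  let ?adj = "adj_of (Phi_edges G s t) Phi_ends"
  have neighbours: "right_neighbours ?adj L B = (\<lambda>g. generate G {s} #> g) ` B" if "B \<in> R" for B
  proof -
    obtain y where "y \<in> carrier G" "B = generate G {t} #> y"
      using \<open>B \<in> R\<close> by (auto simp: R_def)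
    then have "B \<subseteq> carrier G"
      using r_coset_subset_G generate_incl assms(3) by blast
    have "right_neighbours ?adj L B = {A \<in> L. A \<inter> B \<noteq> {}}"
      using \<open>B \<in> R\<close> by (auto simp: right_neighbours_def adj_of_Phi_Inl_Inr L_def R_def)
    also have "\<dots> = (\<lambda>g. generate G {s} #> g) ` B"
      unfolding L_def
      by (rule rcosets_meeting_eq[OF generate_is_subgroup]) (use assms(2) \<open>B \<subseteq> carrier G\<close> in auto)
    finally show ?thesis .
  qed
  have "multigraph (Inl ` L) (Inr ` R) (bipartite_ends ?adj L)"
    using card_rcosets_meeting_involution_coset[OF generate_is_subgroup assms(3,6)] assms(2)
    by (intro multigraph_bipartite_ends) (auto simp: neighbours R_def)
  moreover have "graph_iso (L <+> R) ?adj
      (inc_vertices (Inl ` L) (Inr ` R)) (inc_adj (bipartite_ends ?adj L))"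
    by (rule graph_iso_bipartite_incidence) (auto simp: adj_of_Phi_Inl_Inl adj_of_Phi_Inr_Inr adj_of_sym)
  moreover have "Phi_vertices G s t = L <+> R"
    by (simp add: Phi_vertices_def L_def R_def)
  ultimately show ?thesis by metis
qed

end
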